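(* Let $T$ be an algorithm that is given access to a function via a $t$-online-erasure oracle and performs a specified computational task (i.e., must output a correct answer for its input function). Suppose that for every input function and every adversarial strategy, with probability at least $2/3$, $T$ outputs a correct answer and none of its queries returns $\perp$ during its execution. Then, for the same task, when $T$ is given access to the input function via a $t$-online-corruption oracle (with any adversarial strategy), it outputs a correct answer with probability at least $2/3$.
   Context: An algorithm accesses an input function $f:D\to R$ ($D$ finite) only through an oracle $\mathcal{O}$, querying points one at a time and receiving $\mathcal{O}(x)$; initially $\mathcal{O}(x)=f(x)$ for all $x$. A $t$-online-erasure oracle, after answering each query, may set $\mathcal{O}(x)=\perp$ (a special "erased" symbol) for up to $t$ points $x$; a $t$-online-corruption oracle, after answering each query, may instead replace $\mathcal{O}(x)$ at up to $t$ points $x$ by arbitrary values in the range of $f$. Modified values are used for all future queries. An adversarial strategy (a distribution over decision trees dictating which points to modify, as a function of the input and the queries so far) may depend on $f$, the queries and answers so far, and the algorithm's code, but not on the algorithm's future random coins. *)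

theory Defs
  imports "HOL-Probability.Probability_Mass_Function"
begin

text \<open>Model of oracle algorithms. The oracle answer symbol None plays the role of the
  erased symbol (bot). A history is the chronological list of (query point, answer) pairs.\<close>

datatype ('d, 'o) action = Query 'd | Output 'o

type_synonym ('d, 'r) hist = "('d \<times> 'r option) list"

text \<open>A deterministic algorithm (for a fixed outcome of its random coins) maps the
  history so far to its next action. A randomized algorithm is a coin distribution
  together with such a map for every coin outcome.\<close>

type_synonym ('d, 'r, 'o) det_alg = "('d, 'r) hist \<Rightarrow> ('d, 'o) action"

text \<open>Deterministic corruption strategy:
  given the history so far, choose a partial map of points to new values.
  (The input function f is fixed before the strategy distribution is chosen, so the
  strategy may depend on it.)\<close>

type_synonym ('d, 'r) erase_strategy = "('d \<times> 'r option) list \<Rightarrow> 'd set"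
type_synonym ('d, 'r) corrupt_strategy = "('d \<times> 'r) list \<Rightarrow> ('d \<Rightarrow> 'r option)"

definition valid_erase_adv :: "nat \<Rightarrow> ('d, 'r) erase_strategy pmf \<Rightarrow> bool" where
  "valid_erase_adv t Adv \<longleftrightarrow> (\<forall>s\<in>set_pmf Adv. \<forall>h. finite (s h) \<and> card (s h) \<le> t)"

definition valid_corrupt_adv :: "nat \<Rightarrow> ('d, 'r) corrupt_strategy pmf \<Rightarrow> bool" where
  "valid_corrupt_adv t Adv \<longleftrightarrow> (\<forall>s\<in>set_pmf Adv. \<forall>h. finite (dom (s h)) \<and> card (dom (s h)) \<le> t)"

text \<open>Returns the output (None if the algorithm exceeds its query budget) and the final history.\<close>

fun run_erase :: "nat \<Rightarrow> ('d, 'r, 'o) det_alg \<Rightarrow> ('d, 'r) erase_strategy \<Rightarrow> ('d \<Rightarrow> 'r)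
    \<Rightarrow> 'd set \<Rightarrow> ('d, 'r) hist \<Rightarrow> 'o option \<times> ('d, 'r) hist" where
  "run_erase 0 A s f X h =
     (case A h of Output o' \<Rightarrow> (Some o', h) | Query x \<Rightarrow> (None, h))"
| "run_erase (Suc n) A s f X h =
     (case A h of Output o' \<Rightarrow> (Some o', h)
      | Query x \<Rightarrow> (let h' = h @ [(x, if x \<in> X then None else Some (f x))]
                   in run_erase n A s f (X \<union> s h') h'))"

text \<open>Execution against a t-online-corruption oracle; g is the current oracle content.\<close>

fun run_corrupt :: "nat \<Rightarrow> ('d, 'r, 'o) det_alg \<Rightarrow> ('d, 'r) corrupt_strategy
    \<Rightarrow> ('d \<Rightarrow> 'r) \<Rightarrow> ('d \<times> 'r) list \<Rightarrow> 'o option" where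
  "run_corrupt 0 A s g h =
     (case A (map (\<lambda>(x, v). (x, Some v)) h) of Output o' \<Rightarrow> Some o' | Query x \<Rightarrow> None)"
| "run_corrupt (Suc n) A s g h =
     (case A (map (\<lambda>(x, v). (x, Some v)) h) of Output o' \<Rightarrow> Some o'
      | Query x \<Rightarrow> (let h' = h @ [(x, g x)]; m = s h'
                   in run_corrupt n A s (\<lambda>y. case m y of None \<Rightarrow> g y | Some v \<Rightarrow> v) h'))"

definition erase_success_prob ::
  "nat \<Rightarrow> 'c pmf \<Rightarrow> ('c \<Rightarrow> ('d, 'r, 'o) det_alg) \<Rightarrow> (('d \<Rightarrow> 'r) \<Rightarrow> 'o \<Rightarrow> bool)
   \<Rightarrow> ('d \<Rightarrow> 'r) \<Rightarrow> ('d, 'r) erase_strategy pmf \<Rightarrow> real" where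
  "erase_success_prob q C A correct f Adv =
     measure_pmf.prob (pair_pmf C Adv)
       {(c, s). case run_erase q (A c) s f {} [] of (res, h) \<Rightarrow>
          (\<exists>o'. res = Some o' \<and> correct f o') \<and> (\<forall>(x, a)\<in>set h. a \<noteq> None)}"

definition corrupt_success_prob ::
  "nat \<Rightarrow> 'c pmf \<Rightarrow> ('c \<Rightarrow> ('d, 'r, 'o) det_alg) \<Rightarrow> (('d \<Rightarrow> 'r) \<Rightarrow> 'o \<Rightarrow> bool)
   \<Rightarrow> ('d \<Rightarrow> 'r) \<Rightarrow> ('d, 'r) corrupt_strategy pmf \<Rightarrow> real" where
  "corrupt_success_prob q C A correct f Adv =
     measure_pmf.prob (pair_pmf C Adv)
       {(c, s). \<exists>o'. run_corrupt q (A c) s f [] = Some o' \<and> correct f o'}"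

end

theory Submission
  imports Defs
begin

text \<open>Simulate a corruption adversary by an erasure adversary that erases exactly the points
  the corruption adversary would modify.  Erased points are a superset of the modified ones and
  the remaining points still hold f, so as long as no query is answered with bot, the algorithm
  sees the same answers in both executions and produces the same output.  Hence the event
  "correct output and no bot" of the simulated erasure run is contained in the event "correct
  output" of the corruption run, for the same coins and the same strategy.\<close>

abbreviation lift_hist :: "('d \<times> 'r) list \<Rightarrow> ('d, 'r) hist" where
  "lift_hist h \<equiv> map (\<lambda>(x, v). (x, Some v)) h"

definition erasure_of_corruption :: "('d, 'r) corrupt_strategy \<Rightarrow> ('d, 'r) erase_strategy" where
  "erasure_of_corruption s h = dom (s (map (\<lambda>(x, a). (x, the a)) h))"

lemma erasure_of_corruption_lift_hist [simp]:
  "erasure_of_corruption s (lift_hist h) = dom (s h)"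
proof -
  have "map (\<lambda>(x, a). (x, the a)) (lift_hist h) = h"
    by (induction h) auto
  then show ?thesis
    unfolding erasure_of_corruption_def by simp
qed

lemma valid_erase_adv_map_erasure_of_corruption:
  "valid_corrupt_adv t Adv \<Longrightarrow> valid_erase_adv t (map_pmf erasure_of_corruption Adv)"
  unfolding valid_corrupt_adv_def valid_erase_adv_def erasure_of_corruption_def by auto

lemma run_erase_hist_mono: "set h \<subseteq> set (snd (run_erase n A s f X h))"
proof (induction n arbitrary: X h)
  case 0
  then show ?case by (auto split: action.splits)
next
  case (Suc n)
  show ?case
  proof (cases "A h")
    case (Query x)
    let ?h' = "h @ [(x, if x \<in> X then None else Some (f x))]"
    have "set h \<subseteq> set ?h'" by auto
    also have "\<dots> \<subseteq> set (snd (run_erase n A s f (X \<union> s ?h') ?h'))" by (rule Suc.IH)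
    finally show ?thesis using Query by (simp add: Let_def)
  qed simp
qed

lemma run_corrupt_eq_run_erase_if_no_bot:
  assumes "\<forall>y. y \<notin> X \<longrightarrow> g y = f y"
    and "run_erase n A (erasure_of_corruption s) f X (lift_hist hc) = (res, h)"
    and "\<forall>(x, a)\<in>set h. a \<noteq> None"
  shows "run_corrupt n A s g hc = res"
  using assms
proof (induction n arbitrary: X g hc)
  case 0
  then show ?case by (auto split: action.splits)
next
  case (Suc n)
  show ?case
  proof (cases "A (lift_hist hc)")
    case (Output o')
    then show ?thesis using Suc.prems by simp
  next
    case (Query x)
    let ?E = "erasure_of_corruption s"
    let ?h' = "lift_hist hc @ [(x, if x \<in> X then None else Some (f x))]"
    have run: "run_erase n A ?E f (X \<union> ?E ?h') ?h' = (res, h)"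
      using Suc.prems(2) Query by (simp add: Let_def)
    then have "set ?h' \<subseteq> set h"
      using run_erase_hist_mono[of ?h' n A ?E f "X \<union> ?E ?h'"] by simp
    then have "x \<notin> X"
      using Suc.prems(3) by (auto split: if_splits)
    define hc' where "hc' = hc @ [(x, g x)]"
    define g' where "g' = (\<lambda>y. case s hc' y of None \<Rightarrow> g y | Some v \<Rightarrow> v)"
    have h'_eq: "?h' = lift_hist hc'"
      using \<open>x \<notin> X\<close> Suc.prems(1) by (simp add: hc'_def)
    have "\<forall>y. y \<notin> X \<union> ?E ?h' \<longrightarrow> g' y = f y"
      using Suc.prems(1) unfolding h'_eq g'_def by (auto split: option.splits)
    moreover have "run_erase n A ?E f (X \<union> ?E ?h') (lift_hist hc') = (res, h)"
      using run h'_eq by simp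
    ultimately have "run_corrupt n A s g' hc' = res"
      using Suc.IH Suc.prems(3) by blast
    then show ?thesis
      using Query by (simp add: Let_def hc'_def g'_def)
  qed
qed

lemma erase_success_prob_le_corrupt_success_prob:
  "erase_success_prob q C A correct f (map_pmf erasure_of_corruption Adv)
     \<le> corrupt_success_prob q C A correct f Adv"
proof -
  let ?S = "{(c, s). case run_erase q (A c) s f {} [] of (res, h) \<Rightarrow>
              (\<exists>o'. res = Some o' \<and> correct f o') \<and> (\<forall>(x, a)\<in>set h. a \<noteq> None)}"
  let ?T = "{(c, s). \<exists>o'. run_corrupt q (A c) s f [] = Some o' \<and> correct f o'}"
  have "(c, s) \<in> ?T" if erase_success: "(c, erasure_of_corruption s) \<in> ?S" for c s
  proof -
    obtain h o' where run: "run_erase q (A c) (erasure_of_corruption s) f {} [] = (Some o', h)"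
      and "correct f o'" and "\<forall>(x, a)\<in>set h. a \<noteq> None"
      using erase_success by (auto split: prod.splits)
    then have "run_corrupt q (A c) s f [] = Some o'"
      using run_corrupt_eq_run_erase_if_no_bot[of "{}" f f q "A c" s "[]"] by simp
    with \<open>correct f o'\<close> show ?thesis by blast
  qed
  then have "apsnd erasure_of_corruption -` ?S \<subseteq> ?T"
    by auto
  then have "measure_pmf.prob (pair_pmf C Adv) (apsnd erasure_of_corruption -` ?S)
               \<le> measure_pmf.prob (pair_pmf C Adv) ?T"
    by (simp add: measure_pmf.finite_measure_mono)
  then show ?thesis
    unfolding erase_success_prob_def corrupt_success_prob_def pair_map_pmf2 by simp
qed

theorem lemma1p8:
  fixes q t :: nat
    and C :: "'c pmf"
    and A :: "'c \<Rightarrow> ('d::finite, 'r, 'o) det_alg"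
    and correct :: "('d \<Rightarrow> 'r) \<Rightarrow> 'o \<Rightarrow> bool"
  assumes "\<forall>f (Adv :: ('d, 'r) erase_strategy pmf). valid_erase_adv t Adv \<longrightarrow>
             erase_success_prob q C A correct f Adv \<ge> 2/3"
  shows "\<forall>f (Adv :: ('d, 'r) corrupt_strategy pmf). valid_corrupt_adv t Adv \<longrightarrow>
             corrupt_success_prob q C A correct f Adv \<ge> 2/3"
proof (intro allI impI)
  fix f :: "'d \<Rightarrow> 'r" and Adv :: "('d, 'r) corrupt_strategy pmf"
  assume "valid_corrupt_adv t Adv"
  then have "2/3 \<le> erase_success_prob q C A correct f (map_pmf erasure_of_corruption Adv)"
    using assms valid_erase_adv_map_erasure_of_corruption by blast
  also have "\<dots> \<le> corrupt_success_prob q C A correct f Adv"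
    by (rule erase_success_prob_le_corrupt_success_prob)
  finally show "2/3 \<le> corrupt_success_prob q C A correct f Adv" .
qed

end
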